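(* For every integer $\omega$, there is a proof labeling scheme of size $O(\log n)$ for the class $\mathcal{G}_\omega$ of all graphs $G$ such that each connected component of $G$ admits an elimination tree of width at most $\omega$ which is a spanning tree of (i.e., a subgraph of) that component.
   Context: An elimination tree of a connected graph $G$ is a rooted tree $F$ with $V(F)=V(G)$ such that for every edge $uv$ of $G$, one of $u,v$ is an ancestor of the other in $F$. For $v\in V(F)$ let $F_v$ be the subtree rooted at $v$ and let $\mathsf{str}(v)$ consist of $v$ together with all strict ancestors of $v$ that have a neighbour (in $G$) in $V(F_v)$. The width of $F$ is $\max_v|\mathsf{str}(v)|-1$. Each vertex has a unique identifier in $\{1,\dots,n\}$. A proof labeling scheme for a class $\Pi$: a prover assigns binary labels to vertices; a verifier at $v$ sees only $\mathsf{id}(v)$ and $(\mathsf{id}(w),\varphi(w))$ for $w\in N[v]$ and outputs Yes/No; completeness: on graphs in $\Pi$ the prover's labels make all vertices output Yes; soundness: on graphs not in $\Pi$, for every labeling some vertex outputs No. Size $O(\log n)$: all labels have length $O(\log n)$. *)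

theory Defs
  imports Complex_Main
begin

text \<open>Graphs: the vertices are identified with their unique identifiers, so a graph on n
vertices has vertex set {1..n}; E is a symmetric irreflexive adjacency relation on {1..n}.\<close>
definition graph :: "nat \<Rightarrow> (nat \<Rightarrow> nat \<Rightarrow> bool) \<Rightarrow> bool" where
  "graph n E \<longleftrightarrow> (\<forall>u v. E u v \<longrightarrow> u \<in> {1..n} \<and> v \<in> {1..n} \<and> u \<noteq> v \<and> E v u)"

definition component :: "nat \<Rightarrow> (nat \<Rightarrow> nat \<Rightarrow> bool) \<Rightarrow> nat \<Rightarrow> nat set" where
  "component n E v = {u \<in> {1..n}. (v, u) \<in> {(a, b). E a b}\<^sup>*}"

text \<open>A rooted tree on vertex set C with root r, given by a parent function p
(p v is the parent of v for v \<noteq> r).  The pair (v, p v) is a child-parent pair.\<close>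
definition par_rel :: "nat set \<Rightarrow> nat \<Rightarrow> (nat \<Rightarrow> nat) \<Rightarrow> (nat \<times> nat) set" where
  "par_rel C r p = {(v, p v) | v. v \<in> C \<and> v \<noteq> r}"

definition rooted_tree :: "nat set \<Rightarrow> nat \<Rightarrow> (nat \<Rightarrow> nat) \<Rightarrow> bool" where
  "rooted_tree C r p \<longleftrightarrow> r \<in> C \<and> (\<forall>v \<in> C - {r}. p v \<in> C)
     \<and> (\<forall>v \<in> C. (v, r) \<in> (par_rel C r p)\<^sup>*)"

text \<open>(v, a) in the transitive closure of par_rel means: a is a strict ancestor of v.\<close>
definition elimination_tree :: "(nat \<Rightarrow> nat \<Rightarrow> bool) \<Rightarrow> nat set \<Rightarrow> nat \<Rightarrow> (nat \<Rightarrow> nat) \<Rightarrow> bool" where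
  "elimination_tree E C r p \<longleftrightarrow> rooted_tree C r p \<and>
     (\<forall>u \<in> C. \<forall>v \<in> C. E u v \<longrightarrow> (u, v) \<in> (par_rel C r p)\<^sup>+ \<or> (v, u) \<in> (par_rel C r p)\<^sup>+)"

definition subtree :: "nat set \<Rightarrow> nat \<Rightarrow> (nat \<Rightarrow> nat) \<Rightarrow> nat \<Rightarrow> nat set" where
  "subtree C r p v = {u \<in> C. (u, v) \<in> (par_rel C r p)\<^sup>*}"

definition str :: "(nat \<Rightarrow> nat \<Rightarrow> bool) \<Rightarrow> nat set \<Rightarrow> nat \<Rightarrow> (nat \<Rightarrow> nat) \<Rightarrow> nat \<Rightarrow> nat set" where
  "str E C r p v = {v} \<union> {a. (v, a) \<in> (par_rel C r p)\<^sup>+ \<and> (\<exists>u \<in> subtree C r p v. E a u)}"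

definition width_le :: "(nat \<Rightarrow> nat \<Rightarrow> bool) \<Rightarrow> nat set \<Rightarrow> nat \<Rightarrow> (nat \<Rightarrow> nat) \<Rightarrow> int \<Rightarrow> bool" where
  "width_le E C r p \<omega> \<longleftrightarrow> (\<forall>v \<in> C. int (card (str E C r p v)) - 1 \<le> \<omega>)"

definition tree_in_graph :: "(nat \<Rightarrow> nat \<Rightarrow> bool) \<Rightarrow> nat set \<Rightarrow> nat \<Rightarrow> (nat \<Rightarrow> nat) \<Rightarrow> bool" where
  "tree_in_graph E C r p \<longleftrightarrow> (\<forall>v \<in> C - {r}. E v (p v))"

definition G_class :: "int \<Rightarrow> nat \<Rightarrow> (nat \<Rightarrow> nat \<Rightarrow> bool) \<Rightarrow> bool" where
  "G_class \<omega> n E \<longleftrightarrow> (\<forall>v \<in> {1..n}. \<exists>r p.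
      elimination_tree E (component n E v) r p \<and> tree_in_graph E (component n E v) r p
      \<and> width_le E (component n E v) r p \<omega>)"

definition view :: "(nat \<Rightarrow> nat \<Rightarrow> bool) \<Rightarrow> (nat \<Rightarrow> bool list) \<Rightarrow> nat \<Rightarrow> (nat \<times> bool list) set" where
  "view E lab v = {(w, lab w) | w. w = v \<or> E v w}"

definition pls_log :: "(nat \<Rightarrow> (nat \<Rightarrow> nat \<Rightarrow> bool) \<Rightarrow> bool) \<Rightarrow> bool" where
  "pls_log P \<longleftrightarrow> (\<exists>(D :: nat \<Rightarrow> (nat \<times> bool list) set \<Rightarrow> bool) (c :: real).
     (\<forall>n E. graph n E \<longrightarrow> P n E \<longrightarrow>
        (\<exists>lab :: nat \<Rightarrow> bool list.
           (\<forall>v \<in> {1..n}. real (length (lab v)) \<le> c * (log 2 (real n) + 1)) \<and>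
           (\<forall>v \<in> {1..n}. D v (view E lab v)))) \<and>
     (\<forall>n E. graph n E \<longrightarrow> \<not> P n E \<longrightarrow>
        (\<forall>lab :: nat \<Rightarrow> bool list. \<exists>v \<in> {1..n}. \<not> D v (view E lab v))))"

end

theory Submission
  imports Defs
begin

text \<open>Each vertex is labelled with the identifiers of the root of the tree of its component
  and of its parent, its depth, and the at most \<open>\<omega> + 1\<close> identifiers of \<open>str\<close>, each
  written with \<open>O(log n)\<close> bits.  The verifier checks that the parent is a neighbour one level
  higher whose set contains the own set up to the vertex itself, and that every neighbour has the
  same root, a different depth and, if it is higher, belongs to the own set.  Conversely these
  local conditions force the parent pointers of a component to form a spanning tree rooted at
  its unique self-parent vertex, in which a claimed set consists of the vertex and strict
  ancestors of it.  Hence adjacent vertices are comparable, and since claimed sets are inherited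
  along ancestor paths, they contain the true sets \<open>str\<close>; this bounds the width by \<open>\<omega>\<close>.\<close>

section \<open>Self-delimiting binary encoding\<close>

fun bin_digits :: "nat \<Rightarrow> bool list" where
  "bin_digits x = (if x = 0 then [] else odd x # bin_digits (x div 2))"

declare bin_digits.simps [simp del]

fun of_bin_digits :: "bool list \<Rightarrow> nat" where
  "of_bin_digits [] = 0"
| "of_bin_digits (b # bs) = of_bool b + 2 * of_bin_digits bs"

lemma of_bin_digits_bin_digits [simp]: "of_bin_digits (bin_digits x) = x"
  by (induction x rule: bin_digits.induct) (subst bin_digits.simps, simp)

lemma two_power_length_bin_digits: "0 < x \<Longrightarrow> 2 ^ length (bin_digits x) \<le> 2 * x"
proof (induction x rule: bin_digits.induct)
  case (1 x)
  then have digits: "bin_digits x = odd x # bin_digits (x div 2)"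
    by (simp add: bin_digits.simps)
  show ?case
  proof (cases "x div 2 = 0")
    case True
    with digits "1.prems" show ?thesis by (simp add: bin_digits.simps)
  next
    case False
    with 1 have "2 ^ length (bin_digits (x div 2)) \<le> 2 * (x div 2)" by simp
    with digits show ?thesis by simp
  qed
qed

lemma length_bin_digits_le_log:
  assumes "x \<le> n" and "1 \<le> n"
  shows "real (length (bin_digits x)) \<le> log 2 (real n) + 1"
proof (cases "x = 0")
  case True
  with assms show ?thesis by (simp add: bin_digits.simps)
next
  case False
  with assms have "(2::nat) ^ length (bin_digits x) \<le> 2 * n"
    using two_power_length_bin_digits[of x] by simp
  then have "(2::real) powr real (length (bin_digits x)) \<le> 2 * real n"
    by (simp add: powr_realpow) (metis of_nat_le_iff of_nat_mult of_nat_numeral of_nat_power)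
  then have "real (length (bin_digits x)) \<le> log 2 (2 * real n)"
    using assms by (subst le_log_iff) auto
  also have "\<dots> = log 2 (real n) + 1"
    using assms by (simp add: log_mult)
  finally show ?thesis .
qed

text \<open>A number is written as its binary digits, each preceded by a \<open>True\<close> marker, and
  terminated by \<open>False\<close>; so a concatenation of codes can be split again.  The first argument
  of \<open>decode_nats\<close> accumulates the digits of the number currently being read.\<close>

definition encode_nat :: "nat \<Rightarrow> bool list" where
  "encode_nat x = concat (map (\<lambda>b. [True, b]) (bin_digits x)) @ [False]"

definition encode_nats :: "nat list \<Rightarrow> bool list" where
  "encode_nats xs = concat (map encode_nat xs)"

fun decode_nats :: "bool list \<Rightarrow> bool list \<Rightarrow> nat list" where
  "decode_nats acc [] = []"
| "decode_nats acc [True] = []"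
| "decode_nats acc (True # b # rest) = decode_nats (acc @ [b]) rest"
| "decode_nats acc (False # rest) = of_bin_digits acc # decode_nats [] rest"

lemma decode_nats_digits:
  "decode_nats acc (concat (map (\<lambda>b. [True, b]) bs) @ False # rest)
     = of_bin_digits (acc @ bs) # decode_nats [] rest"
  by (induction bs arbitrary: acc) auto

lemma decode_encode_nats [simp]: "decode_nats [] (encode_nats xs) = xs"
  by (induction xs) (auto simp: encode_nats_def encode_nat_def decode_nats_digits)

lemma length_encode_nats_le_log:
  assumes "\<forall>x\<in>set xs. x \<le> n" and "1 \<le> n"
  shows "real (length (encode_nats xs)) \<le> real (length xs) * (2 * log 2 (real n) + 3)"
proof -
  have pairs: "length (concat (map (\<lambda>b. [True, b]) bs)) = 2 * length bs" for bs :: "bool list"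
    by (induction bs) auto
  from assms show ?thesis
  proof (induction xs)
    case (Cons x xs)
    then have "real (length (bin_digits x)) \<le> log 2 (real n) + 1"
      by (simp add: length_bin_digits_le_log)
    with Cons show ?case
      by (simp add: encode_nats_def encode_nat_def pairs algebra_simps)
  qed (simp add: encode_nats_def)
qed

section \<open>Components and elimination trees\<close>

lemma graph_edgeD:
  "graph n E \<Longrightarrow> E u v \<Longrightarrow> u \<in> {1..n} \<and> v \<in> {1..n} \<and> u \<noteq> v \<and> E v u"
  by (auto simp: graph_def)

lemma component_subset: "component n E v \<subseteq> {1..n}"
  by (auto simp: component_def)

lemma finite_component: "finite (component n E v)"
  by (rule finite_subset[OF component_subset]) simp

lemma in_component_self: "v \<in> {1..n} \<Longrightarrow> v \<in> component n E v"
  by (simp add: component_def)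

lemma component_closed:
  "graph n E \<Longrightarrow> u \<in> component n E v \<Longrightarrow> E u w \<Longrightarrow> w \<in> component n E v"
  using graph_edgeD[of n E u w] rtrancl_into_rtrancl[of v u "{(a, b). E a b}" w]
  by (auto simp: component_def)

lemma component_eq:
  assumes "graph n E" and "u \<in> component n E v"
  shows "component n E u = component n E v"
proof -
  let ?R = "{(a, b). E a b}"
  have "?R\<inverse> = ?R"
    using assms(1) by (auto simp: graph_def)
  moreover have vu: "(v, u) \<in> ?R\<^sup>*"
    using assms(2) by (simp add: component_def)
  ultimately have "(u, v) \<in> ?R\<^sup>*"
    by (metis rtrancl_converseI)
  with vu show ?thesis
    unfolding component_def by (meson rtrancl_trans)
qed

definition ancestors :: "nat set \<Rightarrow> nat \<Rightarrow> (nat \<Rightarrow> nat) \<Rightarrow> nat \<Rightarrow> nat set" where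
  "ancestors C r p x = {a. (x, a) \<in> (par_rel C r p)\<^sup>+}"

definition depth :: "nat set \<Rightarrow> nat \<Rightarrow> (nat \<Rightarrow> nat) \<Rightarrow> nat \<Rightarrow> nat" where
  "depth C r p x = card (ancestors C r p x)"

locale elim_tree =
  fixes E :: "nat \<Rightarrow> nat \<Rightarrow> bool" and C :: "nat set" and r :: nat and p :: "nat \<Rightarrow> nat"
  assumes elimination_tree: "elimination_tree E C r p"
    and finite_C: "finite C"
    and sym_E: "\<And>u v. E u v \<Longrightarrow> E v u"
begin

abbreviation T :: "(nat \<times> nat) set" where
  "T \<equiv> par_rel C r p"

lemma T_iff: "(x, y) \<in> T \<longleftrightarrow> x \<in> C \<and> x \<noteq> r \<and> y = p x"
  by (auto simp: par_rel_def)

lemma root_in: "r \<in> C"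
  and parent_in: "x \<in> C \<Longrightarrow> x \<noteq> r \<Longrightarrow> p x \<in> C"
  and reaches_root: "x \<in> C \<Longrightarrow> (x, r) \<in> T\<^sup>*"
  using elimination_tree by (auto simp: elimination_tree_def rooted_tree_def)

lemma edge_ancestor: "u \<in> C \<Longrightarrow> v \<in> C \<Longrightarrow> E u v \<Longrightarrow> (u, v) \<in> T\<^sup>+ \<or> (v, u) \<in> T\<^sup>+"
  using elimination_tree by (simp add: elimination_tree_def)

lemma ancestor_in: "(x, y) \<in> T\<^sup>+ \<Longrightarrow> x \<in> C \<and> y \<in> C"
  by (induction rule: trancl_induct) (auto simp: T_iff parent_in)

lemma root_no_ancestor: "(r, y) \<notin> T\<^sup>+"
  by (auto simp: T_iff dest: tranclD)

lemma ancestor_trancl_iff_parent: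
  "x \<in> C \<Longrightarrow> x \<noteq> r \<Longrightarrow> (x, a) \<in> T\<^sup>+ \<longleftrightarrow> (p x, a) \<in> T\<^sup>*"
  by (auto simp: T_iff dest: tranclD intro: rtrancl_into_trancl2)

text \<open>On a cycle through \<open>x\<close> every vertex reachable from \<open>x\<close> leads back to \<open>x\<close>, since
  \<open>T\<close> is functional; so a cycle would reach the root and the root would have a parent.\<close>

lemma ancestor_irrefl: "(x, x) \<notin> T\<^sup>+"
proof
  assume cycle: "(x, x) \<in> T\<^sup>+"
  have "(y, x) \<in> T\<^sup>*" if "(x, y) \<in> T\<^sup>*" for y
    using that
  proof (induction rule: rtrancl_induct)
    case (step y z)
    then have "(y, x) \<in> T\<^sup>+"
      using cycle by (cases "y = x") (auto simp: rtrancl_eq_or_trancl)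
    with step.hyps(2) show ?case
      by (auto simp: T_iff dest: tranclD)
  qed simp
  moreover have "(x, r) \<in> T\<^sup>*"
    using cycle ancestor_in reaches_root by blast
  ultimately have "(r, x) \<in> T\<^sup>+"
    using cycle by (auto simp: rtrancl_eq_or_trancl)
  then show False
    using root_no_ancestor by blast
qed

lemma parent_neq: "x \<in> C \<Longrightarrow> x \<noteq> r \<Longrightarrow> p x \<noteq> x"
  using ancestor_irrefl[of x] by (auto simp: T_iff)

lemma finite_ancestors: "finite (ancestors C r p x)"
  by (rule finite_subset[OF _ finite_C]) (auto simp: ancestors_def dest: ancestor_in)

lemma depth_root: "depth C r p r = 0"
  using root_no_ancestor by (simp add: depth_def ancestors_def)

lemma depth_parent: "x \<in> C \<Longrightarrow> x \<noteq> r \<Longrightarrow> depth C r p x = Suc (depth C r p (p x))"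
proof -
  assume x: "x \<in> C" "x \<noteq> r"
  then have "ancestors C r p x = insert (p x) (ancestors C r p (p x))"
    by (auto simp: ancestors_def ancestor_trancl_iff_parent rtrancl_eq_or_trancl)
  moreover have "p x \<notin> ancestors C r p (p x)"
    using ancestor_irrefl by (simp add: ancestors_def)
  ultimately show ?thesis
    using finite_ancestors by (simp add: depth_def)
qed

lemma depth_less: "(x, y) \<in> T\<^sup>+ \<Longrightarrow> depth C r p y < depth C r p x"
  by (induction rule: trancl_induct) (auto simp: T_iff depth_parent)

lemma depth_le_card: "depth C r p x \<le> card C"
  unfolding depth_def
  by (rule card_mono[OF finite_C]) (auto simp: ancestors_def dest: ancestor_in)

lemma depth_neq_if_edge: "v \<in> C \<Longrightarrow> w \<in> C \<Longrightarrow> E v w \<Longrightarrow> depth C r p w \<noteq> depth C r p v"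
  using edge_ancestor[of v w] depth_less by fastforce

lemma str_subset: "v \<in> C \<Longrightarrow> str E C r p v \<subseteq> C"
  by (auto simp: str_def dest: ancestor_in)

lemma str_root: "str E C r p r = {r}"
  using root_no_ancestor by (auto simp: str_def)

lemma str_subset_insert_str_parent:
  assumes "v \<in> C" and "v \<noteq> r"
  shows "str E C r p v \<subseteq> insert v (str E C r p (p v))"
proof
  fix a
  assume a: "a \<in> str E C r p v"
  show "a \<in> insert v (str E C r p (p v))"
  proof (cases "a = v \<or> a = p v")
    case True
    then show ?thesis by (auto simp: str_def)
  next
    case False
    with a assms have "(p v, a) \<in> T\<^sup>+"
      by (auto simp: str_def ancestor_trancl_iff_parent rtrancl_eq_or_trancl)
    moreover from a False obtain u where "u \<in> C" "(u, v) \<in> T\<^sup>*" "E a u"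
      by (auto simp: str_def subtree_def)
    moreover have "(v, p v) \<in> T"
      using assms by (simp add: T_iff)
    ultimately show ?thesis
      by (auto simp: str_def subtree_def intro: rtrancl_into_rtrancl)
  qed
qed

lemma lower_neighbour_in_str:
  assumes "v \<in> C" and "w \<in> C" and "E v w" and "depth C r p w < depth C r p v"
  shows "w \<in> str E C r p v"
proof -
  have "(v, w) \<in> T\<^sup>+"
    using edge_ancestor[OF assms(1-3)] depth_less assms(4) by fastforce
  moreover have "v \<in> subtree C r p v"
    using assms(1) by (simp add: subtree_def)
  ultimately show ?thesis
    using sym_E[OF assms(3)] by (auto simp: str_def)
qed

end

section \<open>The verifier and its soundness\<close>

text \<open>A label encodes the list consisting of the root of the component's tree, the parent
  (the vertex itself at the root), the depth, and the elements of \<open>str\<close>.\<close>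

definition label_root :: "bool list \<Rightarrow> nat" where
  "label_root l = decode_nats [] l ! 0"

definition label_parent :: "bool list \<Rightarrow> nat" where
  "label_parent l = decode_nats [] l ! 1"

definition label_depth :: "bool list \<Rightarrow> nat" where
  "label_depth l = decode_nats [] l ! 2"

definition label_str :: "bool list \<Rightarrow> nat set" where
  "label_str l = set (drop 3 (decode_nats [] l))"

definition locally_consistent :: "int \<Rightarrow> nat \<Rightarrow> bool list \<Rightarrow> (nat \<times> bool list) set \<Rightarrow> bool" where
  "locally_consistent \<omega> v l V \<longleftrightarrow>
     v \<in> label_str l \<and> int (length (drop 3 (decode_nats [] l))) \<le> \<omega> + 1 \<and>
     (label_parent l = v \<longrightarrow> label_root l = v \<and> label_depth l = 0 \<and> label_str l = {v}) \<and>
     (label_parent l \<noteq> v \<longrightarrow> (\<exists>lp. (label_parent l, lp) \<in> V \<and>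
        label_depth lp + 1 = label_depth l \<and> label_str l \<subseteq> insert v (label_str lp))) \<and>
     (\<forall>w lw. (w, lw) \<in> V \<longrightarrow> w \<noteq> v \<longrightarrow> label_root lw = label_root l \<and>
        label_depth lw \<noteq> label_depth l \<and> (label_depth lw < label_depth l \<longrightarrow> w \<in> label_str l))"

definition verifier :: "int \<Rightarrow> nat \<Rightarrow> (nat \<times> bool list) set \<Rightarrow> bool" where
  "verifier \<omega> v V \<longleftrightarrow> (\<forall>l. (v, l) \<in> V \<longrightarrow> locally_consistent \<omega> v l V)"

lemma mem_view_iff: "(w, l) \<in> view E lab v \<longleftrightarrow> (w = v \<or> E v w) \<and> l = lab w"
  by (auto simp: view_def)

locale accepted_labeling =
  fixes n :: nat and E :: "nat \<Rightarrow> nat \<Rightarrow> bool" and lab :: "nat \<Rightarrow> bool list" and \<omega> :: int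
  assumes graph: "graph n E"
    and accepted: "\<And>v. v \<in> {1..n} \<Longrightarrow> verifier \<omega> v (view E lab v)"
begin

abbreviation root_of :: "nat \<Rightarrow> nat" where "root_of v \<equiv> label_root (lab v)"
abbreviation parent_of :: "nat \<Rightarrow> nat" where "parent_of v \<equiv> label_parent (lab v)"
abbreviation depth_of :: "nat \<Rightarrow> nat" where "depth_of v \<equiv> label_depth (lab v)"
abbreviation str_of :: "nat \<Rightarrow> nat set" where "str_of v \<equiv> label_str (lab v)"

lemma locally_consistent: "v \<in> {1..n} \<Longrightarrow> locally_consistent \<omega> v (lab v) (view E lab v)"
  using accepted by (auto simp: verifier_def mem_view_iff)

lemma self_in_str_of: "v \<in> {1..n} \<Longrightarrow> v \<in> str_of v"
  using locally_consistent by (auto simp: locally_consistent_def)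

lemma card_str_of_le: "v \<in> {1..n} \<Longrightarrow> int (card (str_of v)) \<le> \<omega> + 1"
  using locally_consistent[of v] card_length[of "drop 3 (decode_nats [] (lab v))"]
  by (auto simp: locally_consistent_def label_str_def)

lemma self_parent_label:
  "v \<in> {1..n} \<Longrightarrow> parent_of v = v \<Longrightarrow> root_of v = v \<and> depth_of v = 0 \<and> str_of v = {v}"
  using locally_consistent by (auto simp: locally_consistent_def)

lemma parent_label:
  assumes "v \<in> {1..n}" and "parent_of v \<noteq> v"
  shows "E v (parent_of v) \<and> depth_of (parent_of v) + 1 = depth_of v
    \<and> str_of v \<subseteq> insert v (str_of (parent_of v))"
  using locally_consistent[OF assms(1)] assms(2)
  by (auto simp: locally_consistent_def mem_view_iff)

lemma neighbour_label:
  assumes "v \<in> {1..n}" and "E v w"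
  shows "root_of w = root_of v \<and> depth_of w \<noteq> depth_of v \<and> (depth_of w < depth_of v \<longrightarrow> w \<in> str_of v)"
proof -
  have "(w, lab w) \<in> view E lab v" and "w \<noteq> v"
    using assms(2) graph_edgeD[OF graph] by (auto simp: mem_view_iff)
  with locally_consistent[OF assms(1)] show ?thesis
    by (auto simp: locally_consistent_def)
qed

end

locale accepted_component = accepted_labeling +
  fixes v0 :: nat
  assumes v0: "v0 \<in> {1..n}"
begin

abbreviation C :: "nat set" where "C \<equiv> component n E v0"
abbreviation tree_root :: nat where "tree_root \<equiv> root_of v0"
abbreviation T :: "(nat \<times> nat) set" where "T \<equiv> par_rel C tree_root parent_of"

lemma vertex_if_in_C: "u \<in> C \<Longrightarrow> u \<in> {1..n}"
  using component_subset by blast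

lemma root_of_eq: "u \<in> C \<Longrightarrow> root_of u = tree_root"
proof -
  assume "u \<in> C"
  then have "(v0, u) \<in> {(a, b). E a b}\<^sup>*"
    by (simp add: component_def)
  then show ?thesis
  proof (induction rule: rtrancl_induct)
    case (step y z)
    then show ?case
      using neighbour_label[of y z] graph_edgeD[OF graph, of y z] by auto
  qed simp
qed

lemma self_parent_exists: "w \<in> C \<Longrightarrow> \<exists>\<rho>\<in>C. parent_of \<rho> = \<rho>"
proof (induction "depth_of w" arbitrary: w rule: less_induct)
  case less
  show ?case
  proof (cases "parent_of w = w")
    case False
    with parent_label[OF vertex_if_in_C[OF less.prems]]
    have edge: "E w (parent_of w)" and "depth_of (parent_of w) < depth_of w"
      by auto
    moreover have "parent_of w \<in> C"
      using component_closed[OF graph less.prems edge] .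
    ultimately show ?thesis
      using less.hyps by blast
  qed (use less.prems in blast)
qed

lemma tree_root_in_C: "tree_root \<in> C"
  and parent_of_tree_root: "parent_of tree_root = tree_root"
proof -
  obtain \<rho> where \<rho>: "\<rho> \<in> C" "parent_of \<rho> = \<rho>"
    using self_parent_exists in_component_self[OF v0] by blast
  then have "\<rho> = tree_root"
    using self_parent_label[OF vertex_if_in_C] root_of_eq by force
  with \<rho> show "tree_root \<in> C" and "parent_of tree_root = tree_root"
    by auto
qed

lemma self_parent_iff: "u \<in> C \<Longrightarrow> parent_of u = u \<longleftrightarrow> u = tree_root"
  using self_parent_label[OF vertex_if_in_C] root_of_eq parent_of_tree_root by auto

lemma parent_step:
  assumes "x \<in> C" and "x \<noteq> tree_root"
  shows "E x (parent_of x) \<and> parent_of x \<in> C \<and> depth_of (parent_of x) + 1 = depth_of x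
    \<and> str_of x \<subseteq> insert x (str_of (parent_of x))"
proof -
  have "parent_of x \<noteq> x"
    using self_parent_iff assms by blast
  with parent_label vertex_if_in_C assms(1)
  have "E x (parent_of x) \<and> depth_of (parent_of x) + 1 = depth_of x
    \<and> str_of x \<subseteq> insert x (str_of (parent_of x))"
    by blast
  with component_closed[OF graph assms(1)] show ?thesis
    by blast
qed

lemma T_iff: "(x, y) \<in> T \<longleftrightarrow> x \<in> C \<and> x \<noteq> tree_root \<and> y = parent_of x"
  by (auto simp: par_rel_def)

lemma ancestor_depth_less: "(x, y) \<in> T\<^sup>+ \<Longrightarrow> x \<in> C \<and> y \<in> C \<and> depth_of y < depth_of x"
proof (induction rule: trancl_induct)
  case (base y)
  then show ?case
    using parent_step[of x] by (auto simp: T_iff)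
next
  case (step y z)
  then show ?case
    using parent_step[of y] by (auto simp: T_iff)
qed

lemma reaches_tree_root: "x \<in> C \<Longrightarrow> (x, tree_root) \<in> T\<^sup>*"
proof (induction "depth_of x" arbitrary: x rule: less_induct)
  case less
  show ?case
  proof (cases "x = tree_root")
    case False
    with less.prems parent_step[of x]
    have "(x, parent_of x) \<in> T" "parent_of x \<in> C" "depth_of (parent_of x) < depth_of x"
      by (auto simp: T_iff)
    with less.hyps show ?thesis
      by (meson converse_rtrancl_into_rtrancl)
  qed simp
qed

lemma str_of_ancestor: "u \<in> C \<Longrightarrow> a \<in> str_of u \<Longrightarrow> a \<noteq> u \<Longrightarrow> (u, a) \<in> T\<^sup>+"
proof (induction "depth_of u" arbitrary: u rule: less_induct)
  case less
  show ?case
  proof (cases "u = tree_root")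
    case True
    with less.prems show ?thesis
      using self_parent_label[OF vertex_if_in_C[OF tree_root_in_C] parent_of_tree_root] by auto
  next
    case False
    with less.prems parent_step[of u]
    have step: "(u, parent_of u) \<in> T" "parent_of u \<in> C" "depth_of (parent_of u) < depth_of u"
      and "a \<in> str_of (parent_of u)"
      by (auto simp: T_iff)
    then have "a = parent_of u \<or> (parent_of u, a) \<in> T\<^sup>+"
      using less.hyps by blast
    with step show ?thesis
      by (meson r_into_trancl' trancl_into_trancl2)
  qed
qed

lemma str_of_inherited:
  "(u, x) \<in> T\<^sup>* \<Longrightarrow> u \<in> C \<Longrightarrow> a \<in> str_of u \<Longrightarrow> (x, a) \<in> T\<^sup>+ \<Longrightarrow> a \<in> str_of x"
proof (induction rule: rtrancl_induct)
  case (step y z)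
  then have y: "y \<in> C" "y \<noteq> tree_root" "z = parent_of y"
    by (auto simp: T_iff)
  with step have "(y, a) \<in> T\<^sup>+"
    by (meson trancl_into_trancl2)
  with step have "a \<in> str_of y" and "depth_of a < depth_of y"
    using ancestor_depth_less by auto
  with y parent_step[of y] show ?case
    by auto
qed simp

lemma edge_ancestor:
  assumes "u \<in> C" and "v \<in> C" and "E u v"
  shows "(u, v) \<in> T\<^sup>+ \<or> (v, u) \<in> T\<^sup>+"
proof -
  have "E v u" and "u \<noteq> v"
    using graph_edgeD[OF graph assms(3)] by auto
  have uv: "depth_of v \<noteq> depth_of u \<and> (depth_of v < depth_of u \<longrightarrow> v \<in> str_of u)"
    using neighbour_label[OF vertex_if_in_C[OF assms(1)] assms(3)] by blast
  have vu: "depth_of u < depth_of v \<longrightarrow> u \<in> str_of v"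
    using neighbour_label[OF vertex_if_in_C[OF assms(2)] \<open>E v u\<close>] by blast
  from uv consider "depth_of v < depth_of u" | "depth_of u < depth_of v"
    by linarith
  then show ?thesis
  proof cases
    case 1
    with uv \<open>u \<noteq> v\<close> show ?thesis
      using str_of_ancestor[OF assms(1)] by blast
  next
    case 2
    with vu \<open>u \<noteq> v\<close> show ?thesis
      using str_of_ancestor[OF assms(2)] by blast
  qed
qed

lemma elimination_tree: "elimination_tree E C tree_root parent_of"
proof -
  have "\<forall>v \<in> C - {tree_root}. parent_of v \<in> C"
    using parent_step by blast
  then show ?thesis
    using tree_root_in_C reaches_tree_root edge_ancestor
    by (simp add: elimination_tree_def rooted_tree_def)
qed

lemma tree_in_graph: "tree_in_graph E C tree_root parent_of"
  using parent_step by (simp add: tree_in_graph_def)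

lemma str_subset_str_of: "v \<in> C \<Longrightarrow> str E C tree_root parent_of v \<subseteq> str_of v"
proof
  fix a
  assume v: "v \<in> C" and a: "a \<in> str E C tree_root parent_of v"
  show "a \<in> str_of v"
  proof (cases "a = v")
    case True
    with v show ?thesis
      using self_in_str_of vertex_if_in_C by blast
  next
    case False
    with a have va: "(v, a) \<in> T\<^sup>+"
      by (simp add: str_def)
    from a False obtain u where u: "u \<in> C" "(u, v) \<in> T\<^sup>*" "E a u"
      by (auto simp: str_def subtree_def)
    have "(u, a) \<in> T\<^sup>+"
      using u(2) va by (rule rtrancl_trancl_trancl)
    then have "depth_of a < depth_of u"
      using ancestor_depth_less by blast
    moreover have "E u a"
      using graph_edgeD[OF graph u(3)] by blast
    ultimately have "a \<in> str_of u"
      using neighbour_label[OF vertex_if_in_C[OF u(1)]] by blast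
    then show ?thesis
      using str_of_inherited[OF u(2,1) _ va] by blast
  qed
qed

lemma width_le: "width_le E C tree_root parent_of \<omega>"
  unfolding width_le_def
proof
  fix v
  assume v: "v \<in> C"
  have "card (str E C tree_root parent_of v) \<le> card (str_of v)"
    using str_subset_str_of[OF v] by (rule card_mono[rotated]) (simp add: label_str_def)
  with card_str_of_le[OF vertex_if_in_C[OF v]]
  show "int (card (str E C tree_root parent_of v)) - 1 \<le> \<omega>"
    by linarith
qed

end

lemma (in accepted_labeling) G_class: "G_class \<omega> n E"
  unfolding G_class_def
proof
  fix v
  assume "v \<in> {1..n}"
  then interpret accepted_component n E lab \<omega> v
    by unfold_locales
  show "\<exists>r p. elimination_tree E C r p \<and> tree_in_graph E C r p \<and> width_le E C r p \<omega>"
    using elimination_tree tree_in_graph width_le by blast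
qed

section \<open>Completeness\<close>

definition admissible_tree :: "int \<Rightarrow> (nat \<Rightarrow> nat \<Rightarrow> bool) \<Rightarrow> nat set \<Rightarrow> nat \<Rightarrow> (nat \<Rightarrow> nat) \<Rightarrow> bool" where
  "admissible_tree \<omega> E C r p \<longleftrightarrow>
     elimination_tree E C r p \<and> tree_in_graph E C r p \<and> width_le E C r p \<omega>"

locale member_of_G_class =
  fixes n :: nat and E :: "nat \<Rightarrow> nat \<Rightarrow> bool" and \<omega> :: int
  assumes graph: "graph n E" and in_G_class: "G_class \<omega> n E"
begin

definition chosen_tree :: "nat set \<Rightarrow> nat \<times> (nat \<Rightarrow> nat)" where
  "chosen_tree C = (SOME (r, p). admissible_tree \<omega> E C r p)"

definition canonical_root :: "nat \<Rightarrow> nat" where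
  "canonical_root v = fst (chosen_tree (component n E v))"

definition canonical_parent :: "nat \<Rightarrow> nat \<Rightarrow> nat" where
  "canonical_parent v = snd (chosen_tree (component n E v))"

definition canonical_fields :: "nat \<Rightarrow> nat list" where
  "canonical_fields v =
     [canonical_root v, if v = canonical_root v then v else canonical_parent v v,
      depth (component n E v) (canonical_root v) (canonical_parent v) v]
     @ sorted_list_of_set (str E (component n E v) (canonical_root v) (canonical_parent v) v)"

definition canonical_label :: "nat \<Rightarrow> bool list" where
  "canonical_label v = encode_nats (canonical_fields v)"

lemma admissible_canonical:
  "v \<in> {1..n} \<Longrightarrow> admissible_tree \<omega> E (component n E v) (canonical_root v) (canonical_parent v)"
proof -
  assume "v \<in> {1..n}"
  then have "\<exists>rp. case rp of (r, p) \<Rightarrow> admissible_tree \<omega> E (component n E v) r p"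
    using in_G_class by (auto simp: G_class_def admissible_tree_def)
  then show ?thesis
    unfolding canonical_root_def canonical_parent_def chosen_tree_def
    by (metis (mono_tags, lifting) case_prod_beta someI_ex)
qed

lemma canonical_eq:
  "u \<in> component n E v \<Longrightarrow>
     canonical_root u = canonical_root v \<and> canonical_parent u = canonical_parent v"
  using component_eq[OF graph] by (simp add: canonical_root_def canonical_parent_def)

lemma elim_tree_canonical:
  "v \<in> {1..n} \<Longrightarrow> elim_tree E (component n E v) (canonical_root v) (canonical_parent v)"
  using admissible_canonical finite_component graph_edgeD[OF graph]
  by (auto simp: admissible_tree_def elim_tree_def)

lemma canonical_label_fields:
  assumes "v \<in> {1..n}" and "w \<in> component n E v"
  defines "C \<equiv> component n E v" and "r \<equiv> canonical_root v" and "p \<equiv> canonical_parent v"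
  shows "label_root (canonical_label w) = r"
    and "label_parent (canonical_label w) = (if w = r then w else p w)"
    and "label_depth (canonical_label w) = depth C r p w"
    and "label_str (canonical_label w) = str E C r p w"
    and "drop 3 (decode_nats [] (canonical_label w)) = sorted_list_of_set (str E C r p w)"
proof -
  interpret elim_tree E C r p
    using elim_tree_canonical[OF assms(1)] by (simp add: C_def r_def p_def)
  have "finite (str E C r p w)"
    using str_subset[of w] assms(2) finite_C finite_subset unfolding C_def by blast
  moreover have "canonical_fields w = [r, if w = r then w else p w, depth C r p w]
      @ sorted_list_of_set (str E C r p w)"
    using canonical_eq[OF assms(2)] component_eq[OF graph assms(2)]
    by (simp add: canonical_fields_def C_def r_def p_def)
  ultimately show "label_root (canonical_label w) = r"
    and "label_parent (canonical_label w) = (if w = r then w else p w)"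
    and "label_depth (canonical_label w) = depth C r p w"
    and "label_str (canonical_label w) = str E C r p w"
    and "drop 3 (decode_nats [] (canonical_label w)) = sorted_list_of_set (str E C r p w)"
    by (simp_all add: canonical_label_def label_root_def label_parent_def label_depth_def
        label_str_def)
qed

lemma canonical_label_accepted:
  assumes v: "v \<in> {1..n}"
  shows "verifier \<omega> v (view E canonical_label v)"
proof -
  define C r p where "C = component n E v" and "r = canonical_root v" and "p = canonical_parent v"
  interpret elim_tree E C r p
    using elim_tree_canonical[OF v] by (simp add: C_def r_def p_def)
  note fields = canonical_label_fields[OF v, folded C_def r_def p_def]
  have vC: "v \<in> C"
    using in_component_self[OF v] by (simp add: C_def)
  have admissible: "admissible_tree \<omega> E C r p"
    using admissible_canonical[OF v] by (simp add: C_def r_def p_def)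
  have width: "int (card (str E C r p v)) \<le> \<omega> + 1"
    using admissible vC by (auto simp: admissible_tree_def width_le_def)
  have root: "r = v \<and> depth C r p v = 0 \<and> str E C r p v = {v}" if "v = r"
    using that depth_root str_root by simp
  have parent: "\<exists>l. (p v, l) \<in> view E canonical_label v \<and> label_depth l + 1 = depth C r p v
      \<and> str E C r p v \<subseteq> insert v (label_str l)" if "v \<noteq> r"
  proof (intro exI conjI)
    have "E v (p v)"
      using admissible vC that by (auto simp: admissible_tree_def tree_in_graph_def)
    then show "(p v, canonical_label (p v)) \<in> view E canonical_label v"
      by (simp add: mem_view_iff)
    have "p v \<in> C"
      using parent_in[OF vC that] .
    then show "label_depth (canonical_label (p v)) + 1 = depth C r p v"
      and "str E C r p v \<subseteq> insert v (label_str (canonical_label (p v)))"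
      using fields[of "p v"] depth_parent[OF vC that] str_subset_insert_str_parent[OF vC that]
      by (simp_all add: C_def)
  qed
  have neighbour: "label_root l = r \<and> label_depth l \<noteq> depth C r p v
      \<and> (label_depth l < depth C r p v \<longrightarrow> w \<in> str E C r p v)"
    if "(w, l) \<in> view E canonical_label v" and "w \<noteq> v" for w l
  proof -
    from that have w: "E v w" "l = canonical_label w"
      by (auto simp: mem_view_iff)
    then have "w \<in> C"
      using component_closed[OF graph] vC by (simp add: C_def)
    with w show ?thesis
      using fields[of w] depth_neq_if_edge[OF vC] lower_neighbour_in_str[OF vC]
      by (simp add: C_def)
  qed
  show ?thesis
    unfolding verifier_def
  proof (intro allI impI)
    fix l
    assume "(v, l) \<in> view E canonical_label v"
    then have l: "l = canonical_label v"
      by (simp add: mem_view_iff)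
    have "v \<in> str E C r p v"
      by (simp add: str_def)
    with width root parent neighbour parent_neq[OF vC]
    show "locally_consistent \<omega> v l (view E canonical_label v)"
      unfolding locally_consistent_def l fields[OF vC] by auto
  qed
qed

lemma length_canonical_label_le:
  assumes v: "v \<in> {1..n}"
  shows "real (length (canonical_label v)) \<le> 3 * (4 + real_of_int \<bar>\<omega>\<bar>) * (log 2 (real n) + 1)"
proof -
  define C r p where "C = component n E v" and "r = canonical_root v" and "p = canonical_parent v"
  interpret elim_tree E C r p
    using elim_tree_canonical[OF v] by (simp add: C_def r_def p_def)
  have vC: "v \<in> C"
    using in_component_self[OF v] by (simp add: C_def)
  have C_n: "C \<subseteq> {1..n}" and card_C: "card C \<le> n"
    using component_subset[of n E v] card_mono[of "{1..n}" C] by (auto simp: C_def)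
  have str_C: "str E C r p v \<subseteq> C"
    using str_subset[OF vC] .
  have fields: "canonical_fields v = [r, if v = r then v else p v, depth C r p v]
      @ sorted_list_of_set (str E C r p v)"
    by (simp add: canonical_fields_def C_def r_def p_def)
  have "\<forall>x \<in> set (canonical_fields v). x \<le> n"
    using root_in parent_in[OF vC] vC str_C C_n depth_le_card[of v] card_C
    unfolding fields by (auto simp: finite_subset[OF str_C finite_C])
  then have "real (length (canonical_label v))
      \<le> real (length (canonical_fields v)) * (2 * log 2 (real n) + 3)"
    using v by (simp add: canonical_label_def length_encode_nats_le_log)
  also have "\<dots> \<le> (4 + real_of_int \<bar>\<omega>\<bar>) * (3 * (log 2 (real n) + 1))"
  proof (rule mult_mono)
    have "int (card (str E C r p v)) - 1 \<le> \<omega>"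
      using admissible_canonical[OF v] vC
      by (auto simp: admissible_tree_def width_le_def C_def r_def p_def)
    then show "real (length (canonical_fields v)) \<le> 4 + real_of_int \<bar>\<omega>\<bar>"
      by (simp add: fields)
    show "2 * log 2 (real n) + 3 \<le> 3 * (log 2 (real n) + 1)"
      using v by simp
  qed (use v in simp_all)
  finally show ?thesis
    by (simp add: algebra_simps)
qed

lemma short_accepted_labeling:
  "\<exists>lab. (\<forall>v \<in> {1..n}. real (length (lab v)) \<le> 3 * (4 + real_of_int \<bar>\<omega>\<bar>) * (log 2 (real n) + 1))
     \<and> (\<forall>v \<in> {1..n}. verifier \<omega> v (view E lab v))"
  using length_canonical_label_le canonical_label_accepted by blast

end

theorem proposition5:
  fixes \<omega> :: int
  shows "pls_log (G_class \<omega>)"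
  unfolding pls_log_def
proof (intro exI[of _ "verifier \<omega>"] exI[of _ "3 * (4 + real_of_int \<bar>\<omega>\<bar>)"] conjI allI impI)
  fix n E
  assume "graph n E" and "G_class \<omega> n E"
  then interpret member_of_G_class n E \<omega>
    by unfold_locales
  show "\<exists>lab. (\<forall>v \<in> {1..n}. real (length (lab v)) \<le> 3 * (4 + real_of_int \<bar>\<omega>\<bar>) * (log 2 (real n) + 1))
      \<and> (\<forall>v \<in> {1..n}. verifier \<omega> v (view E lab v))"
    by (rule short_accepted_labeling)
next
  fix n E lab
  assume "graph n E" and "\<not> G_class \<omega> n E"
  then show "\<exists>v \<in> {1..n}. \<not> verifier \<omega> v (view E lab v)"
    using accepted_labeling.G_class[of n E lab \<omega>] unfolding accepted_labeling_def by blast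
qed

end
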